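(* Let $G$ be a strongly connected directed graph on $n\ge 1$ vertices with nonnegative integer edge weights and radius $R=\min_u\max_v d_G(u,v)$, and let $k$ be a positive integer. Let $G'$ be obtained from $G$ by multiplying every edge weight by $2$ and adding a new vertex $x$ together with edges $(x,u)$ and $(u,x)$ of weight $k$ for every $u\in V(G)$. Then $R\ge k$ if and only if $\sum_{u\in V(G')}\max_{v\in V(G')}d_{G'}(u,v)=2kn+k$.
   Context: $d_G(u,v)$ denotes the shortest-path distance in $G$. *)

theory Defs
  imports Main "HOL-Library.Extended_Nat"
begin

definition is_walk :: "'a set \<Rightarrow> ('a \<times> 'a) set \<Rightarrow> 'a list \<Rightarrow> 'a \<Rightarrow> 'a \<Rightarrow> bool" where
  "is_walk V E p u v \<longleftrightarrow> p \<noteq> [] \<and> hd p = u \<and> last p = v \<and> set p \<subseteq> V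
     \<and> (\<forall>i < length p - 1. (p ! i, p ! Suc i) \<in> E)"

definition walk_weight :: "('a \<times> 'a \<Rightarrow> nat) \<Rightarrow> 'a list \<Rightarrow> nat" where
  "walk_weight w p = sum_list (map w (zip p (tl p)))"

text \<open>Shortest-path distance d_G(u,v) (infinite if v is unreachable from u).\<close>
definition dist :: "'a set \<Rightarrow> ('a \<times> 'a) set \<Rightarrow> ('a \<times> 'a \<Rightarrow> nat) \<Rightarrow> 'a \<Rightarrow> 'a \<Rightarrow> enat" where
  "dist V E w u v = Inf {enat (walk_weight w p) | p. is_walk V E p u v}"

definition ecc :: "'a set \<Rightarrow> ('a \<times> 'a) set \<Rightarrow> ('a \<times> 'a \<Rightarrow> nat) \<Rightarrow> 'a \<Rightarrow> enat" where
  "ecc V E w u = Max ((\<lambda>v. dist V E w u v) ` V)"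

definition radius :: "'a set \<Rightarrow> ('a \<times> 'a) set \<Rightarrow> ('a \<times> 'a \<Rightarrow> nat) \<Rightarrow> enat" where
  "radius V E w = Min ((\<lambda>u. ecc V E w u) ` V)"

definition strongly_connected :: "'a set \<Rightarrow> ('a \<times> 'a) set \<Rightarrow> bool" where
  "strongly_connected V E \<longleftrightarrow> (\<forall>u\<in>V. \<forall>v\<in>V. (u, v) \<in> E\<^sup>*)"

text \<open>The construction G': old vertices are Some u, the new vertex x is None.\<close>
definition ext_V :: "'a set \<Rightarrow> 'a option set" where
  "ext_V V = Some ` V \<union> {None}"

definition ext_E :: "'a set \<Rightarrow> ('a \<times> 'a) set \<Rightarrow> ('a option \<times> 'a option) set" where
  "ext_E V E = {(Some a, Some b) | a b. (a, b) \<in> E}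
              \<union> {(None, Some u) | u. u \<in> V} \<union> {(Some u, None) | u. u \<in> V}"

definition ext_w :: "('a \<times> 'a \<Rightarrow> nat) \<Rightarrow> nat \<Rightarrow> 'a option \<times> 'a option \<Rightarrow> nat" where
  "ext_w w k e = (case e of (Some a, Some b) \<Rightarrow> 2 * w (a, b) | _ \<Rightarrow> k)"

end

theory Submission
  imports Defs
begin

text \<open>In \<open>G'\<close> the new vertex \<open>x\<close> is at distance exactly \<open>k\<close> to and from every old vertex:
  a walk that enters or leaves \<open>x\<close> uses an edge of weight \<open>k\<close>. A walk between old vertices
  either passes through \<open>x\<close>, using two such edges, or is a walk of \<open>G\<close> with doubled weight, so
  \<open>d\<^sub>G\<^sub>'(u, v) = min (2 d\<^sub>G(u, v)) (2k)\<close>. Hence \<open>ecc\<^sub>G\<^sub>'(x) = k\<close>, every old vertex has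
  \<open>ecc\<^sub>G\<^sub>'(u) \<le> 2k\<close>, with equality iff \<open>ecc\<^sub>G(u) \<ge> k\<close>. The sum of eccentricities therefore
  equals \<open>2kn + k\<close> iff every old vertex has \<open>G\<close>-eccentricity at least \<open>k\<close>, i.e. iff \<open>R \<ge> k\<close>.\<close>

lemma walk_weight_append:
  "walk_weight w (xs @ x # ys) = walk_weight w (xs @ [x]) + walk_weight w (x # ys)"
  by (induction xs rule: induct_list012) (auto simp: walk_weight_def)

lemma walk_weight_map_Some_ext:
  "walk_weight (ext_w w k) (map Some q) = 2 * walk_weight w q"
  by (induction q rule: induct_list012) (auto simp: walk_weight_def ext_w_def)

lemma is_walk_map_Some_ext:
  "is_walk (ext_V V) (ext_E V E) (map Some q) (Some u) (Some v) \<longleftrightarrow> is_walk V E q u v"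
  by (auto simp: is_walk_def ext_V_def ext_E_def hd_map last_map)

lemma dist_le_walk_weight: "is_walk V E p u v \<Longrightarrow> dist V E w u v \<le> enat (walk_weight w p)"
  unfolding dist_def by (rule Inf_lower) auto

lemma le_distI: "(\<And>p. is_walk V E p u v \<Longrightarrow> c \<le> walk_weight w p) \<Longrightarrow> enat c \<le> dist V E w u v"
  unfolding dist_def by (rule Inf_greatest) auto

lemma shortest_walk_exists:
  assumes "dist V E w u v \<noteq> \<infinity>"
  obtains p where "is_walk V E p u v" "dist V E w u v = enat (walk_weight w p)"
proof -
  let ?S = "{enat (walk_weight w p) | p. is_walk V E p u v}"
  have "?S \<noteq> {}" using assms by (auto simp: dist_def top_enat_def[symmetric])
  then have "Inf ?S \<in> ?S" unfolding Inf_enat_def by (auto intro: LeastI)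
  then show ?thesis using that unfolding dist_def by blast
qed

lemma walk_weight_ge_last_edge:
  "xs \<noteq> [] \<Longrightarrow> w (last xs, x) \<le> walk_weight w (xs @ [x])"
proof -
  assume "xs \<noteq> []"
  then have "walk_weight w (xs @ [x])
      = walk_weight w (butlast xs @ [last xs]) + walk_weight w [last xs, x]"
    using walk_weight_append[of w "butlast xs" "last xs" "[x]"]
    by (metis append.assoc append_Cons append_Nil append_butlast_last_id)
  then show ?thesis by (simp add: walk_weight_def)
qed

lemma walk_weight_ext_via_None:
  assumes "None \<in> set p"
  shows "k * (of_bool (hd p \<noteq> None) + of_bool (last p \<noteq> None)) \<le> walk_weight (ext_w w k) p"
proof -
  obtain xs ys where p: "p = xs @ None # ys"
    using split_list_first[OF assms] by blast
  have into_None: "k * of_bool (hd p \<noteq> None) \<le> walk_weight (ext_w w k) (xs @ [None])"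
    using walk_weight_ge_last_edge[of xs "ext_w w k" None] p
    by (cases xs) (auto simp: ext_w_def split: option.splits)
  have out_of_None: "k * of_bool (last p \<noteq> None) \<le> walk_weight (ext_w w k) (None # ys)"
    using p by (cases ys) (auto simp: walk_weight_def ext_w_def split: option.splits)
  show ?thesis
    using into_None out_of_None walk_weight_append[of "ext_w w k" xs None ys] p
    by (simp add: add_mult_distrib2)
qed

lemma finite_ext_V: "finite V \<Longrightarrow> finite (ext_V V)"
  by (simp add: ext_V_def)

lemma image_ext_V: "f ` ext_V V = insert (f None) ((\<lambda>u. f (Some u)) ` V)"
  by (auto simp: ext_V_def)

lemma sum_ext_V: "finite V \<Longrightarrow> sum f (ext_V V) = f None + (\<Sum>u\<in>V. f (Some u))"
  by (simp add: ext_V_def sum.reindex)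

abbreviation dist_ext :: "'a set \<Rightarrow> ('a \<times> 'a) set \<Rightarrow> ('a \<times> 'a \<Rightarrow> nat) \<Rightarrow> nat \<Rightarrow> 'a option \<Rightarrow> 'a option \<Rightarrow> enat" where
  "dist_ext V E w k \<equiv> dist (ext_V V) (ext_E V E) (ext_w w k)"

abbreviation ecc_ext :: "'a set \<Rightarrow> ('a \<times> 'a) set \<Rightarrow> ('a \<times> 'a \<Rightarrow> nat) \<Rightarrow> nat \<Rightarrow> 'a option \<Rightarrow> enat" where
  "ecc_ext V E w k \<equiv> ecc (ext_V V) (ext_E V E) (ext_w w k)"

lemma dist_ext_None_None: "dist_ext V E w k None None = 0"
proof -
  have "is_walk (ext_V V) (ext_E V E) [None] None None"
    by (simp add: is_walk_def ext_V_def)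
  from dist_le_walk_weight[OF this, of "ext_w w k"] show ?thesis
    by (simp add: walk_weight_def flip: zero_enat_def)
qed

lemma dist_ext_None_Some:
  assumes "u \<in> V" shows "dist_ext V E w k None (Some u) = enat k"
proof (rule antisym)
  have "is_walk (ext_V V) (ext_E V E) [None, Some u] None (Some u)"
    using assms by (simp add: is_walk_def ext_V_def ext_E_def)
  from dist_le_walk_weight[OF this, of "ext_w w k"] show "dist_ext V E w k None (Some u) \<le> enat k"
    by (simp add: walk_weight_def ext_w_def)
  show "enat k \<le> dist_ext V E w k None (Some u)"
  proof (rule le_distI)
    fix p assume "is_walk (ext_V V) (ext_E V E) p None (Some u)"
    then have "p \<noteq> []" "hd p = None" "last p = Some u" by (auto simp: is_walk_def)
    moreover from this have "None \<in> set p" by (metis hd_in_set)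
    ultimately show "k \<le> walk_weight (ext_w w k) p"
      using walk_weight_ext_via_None[of p k w] by simp
  qed
qed

lemma dist_ext_Some_None:
  assumes "u \<in> V" shows "dist_ext V E w k (Some u) None = enat k"
proof (rule antisym)
  have "is_walk (ext_V V) (ext_E V E) [Some u, None] (Some u) None"
    using assms by (simp add: is_walk_def ext_V_def ext_E_def)
  from dist_le_walk_weight[OF this, of "ext_w w k"] show "dist_ext V E w k (Some u) None \<le> enat k"
    by (simp add: walk_weight_def ext_w_def)
  show "enat k \<le> dist_ext V E w k (Some u) None"
  proof (rule le_distI)
    fix p assume "is_walk (ext_V V) (ext_E V E) p (Some u) None"
    then have "p \<noteq> []" "hd p = Some u" "last p = None" by (auto simp: is_walk_def)
    moreover from this have "None \<in> set p" by (metis last_in_set)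
    ultimately show "k \<le> walk_weight (ext_w w k) p"
      using walk_weight_ext_via_None[of p k w] by simp
  qed
qed

lemma dist_ext_Some_Some:
  assumes "u \<in> V" "v \<in> V"
  shows "dist_ext V E w k (Some u) (Some v) = min (2 * dist V E w u v) (enat (2 * k))"
proof (rule antisym)
  have "is_walk (ext_V V) (ext_E V E) [Some u, None, Some v] (Some u) (Some v)"
    using assms by (simp add: is_walk_def ext_V_def ext_E_def nth_Cons split: nat.split)
  from dist_le_walk_weight[OF this, of "ext_w w k"]
  have via_None: "dist_ext V E w k (Some u) (Some v) \<le> enat (2 * k)"
    by (simp add: walk_weight_def ext_w_def mult_2)
  have inside_G: "dist_ext V E w k (Some u) (Some v) \<le> 2 * dist V E w u v"
  proof (cases "dist V E w u v = \<infinity>")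
    case False
    then obtain q where q: "is_walk V E q u v" "dist V E w u v = enat (walk_weight w q)"
      by (rule shortest_walk_exists)
    from q(1) have "is_walk (ext_V V) (ext_E V E) (map Some q) (Some u) (Some v)"
      by (simp add: is_walk_map_Some_ext)
    from dist_le_walk_weight[OF this, of "ext_w w k"] show ?thesis
      using q(2) by (simp add: walk_weight_map_Some_ext numeral_eq_enat)
  qed (simp add: numeral_eq_enat)
  from via_None inside_G
  show "dist_ext V E w k (Some u) (Some v) \<le> min (2 * dist V E w u v) (enat (2 * k))"
    by simp
  show "min (2 * dist V E w u v) (enat (2 * k)) \<le> dist_ext V E w k (Some u) (Some v)"
    unfolding dist_def[of "ext_V V"]
  proof (rule Inf_greatest, clarify)
    fix p assume p: "is_walk (ext_V V) (ext_E V E) p (Some u) (Some v)"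
    show "min (2 * dist V E w u v) (enat (2 * k)) \<le> enat (walk_weight (ext_w w k) p)"
    proof (cases "None \<in> set p")
      case True
      with p have "2 * k \<le> walk_weight (ext_w w k) p"
        using walk_weight_ext_via_None[of p k w] by (auto simp: is_walk_def)
      then show ?thesis by (simp add: min.coboundedI2)
    next
      case False
      then obtain q where "p = map Some q" by (metis ex_map_conv option.exhaust)
      with p have "2 * dist V E w u v \<le> 2 * enat (walk_weight w q)"
        by (simp add: is_walk_map_Some_ext dist_le_walk_weight mult_left_mono)
      then show ?thesis
        using \<open>p = map Some q\<close>
        by (simp add: walk_weight_map_Some_ext min.coboundedI1 numeral_eq_enat)
    qed
  qed
qed

lemma ecc_ext_None:
  assumes "finite V" "V \<noteq> {}"
  shows "ecc_ext V E w k None = enat k"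
  unfolding ecc_def
proof (rule Max_eqI)
  show "finite (dist_ext V E w k None ` ext_V V)"
    using assms(1) by (simp add: finite_ext_V)
  show "y \<le> enat k" if "y \<in> dist_ext V E w k None ` ext_V V" for y
    using that by (auto simp: image_ext_V dist_ext_None_None dist_ext_None_Some)
  obtain u where "u \<in> V" using assms(2) by blast
  then show "enat k \<in> dist_ext V E w k None ` ext_V V"
    by (force simp: image_ext_V dist_ext_None_Some)
qed

lemma ecc_ext_Some_le:
  assumes "finite V" "u \<in> V"
  shows "ecc_ext V E w k (Some u) \<le> enat (2 * k)"
  using assms unfolding ecc_def
  by (subst Max_le_iff) (auto simp: finite_ext_V image_ext_V dist_ext_Some_None dist_ext_Some_Some)

lemma ecc_ext_Some_eq_iff:
  assumes "finite V" "u \<in> V"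
  shows "ecc_ext V E w k (Some u) = enat (2 * k) \<longleftrightarrow> enat k \<le> ecc V E w u"
proof -
  have doubled: "enat (2 * k) \<le> 2 * d \<longleftrightarrow> enat k \<le> d" for d
    by (cases d) (simp_all add: numeral_eq_enat)
  have "ecc_ext V E w k (Some u) = enat (2 * k) \<longleftrightarrow> enat (2 * k) \<le> ecc_ext V E w k (Some u)"
    using ecc_ext_Some_le[OF assms] by (auto intro: antisym)
  also have "\<dots> \<longleftrightarrow> k = 0 \<or> (\<exists>v\<in>V. enat k \<le> dist V E w u v)"
    using assms unfolding ecc_def
    by (subst Max_ge_iff)
      (auto simp: finite_ext_V image_ext_V dist_ext_Some_None dist_ext_Some_Some doubled)
  also have "\<dots> \<longleftrightarrow> enat k \<le> ecc V E w u"
    using assms unfolding ecc_def by (subst Max_ge_iff) (auto simp: zero_enat_def[symmetric])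
  finally show ?thesis .
qed

lemma sum_enat_eq_card_mult_iff:
  fixes f :: "'b \<Rightarrow> enat"
  assumes "finite A" and bounded: "\<forall>x\<in>A. f x \<le> enat c"
  shows "sum f A = enat (c * card A) \<longleftrightarrow> (\<forall>x\<in>A. f x = enat c)"
proof -
  define g where "g x = the_enat (f x)" for x
  have f_g: "f x = enat (g x)" if "x \<in> A" for x
    using bounded that by (cases "f x") (auto simp: g_def)
  then have "sum f A = enat (sum g A)"
    by (simp add: of_nat_eq_enat[symmetric] of_nat_sum)
  moreover have "sum g A = c * card A \<longleftrightarrow> (\<forall>x\<in>A. g x = c)"
  proof
    assume "sum g A = c * card A"
    then show "\<forall>x\<in>A. g x = c"
      using sum_mono_inv[of g A "\<lambda>_. c"] assms(1) bounded f_g by auto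
  qed simp
  ultimately show ?thesis using f_g by auto
qed

theorem mainTheorem5:
  fixes V :: "'a set" and E :: "('a \<times> 'a) set" and w :: "'a \<times> 'a \<Rightarrow> nat" and k n :: nat
  assumes "finite V" and "card V = n" and "n \<ge> 1"
    and "E \<subseteq> V \<times> V"
    and "strongly_connected V E"
    and "k > 0"
  shows "radius V E w \<ge> enat k \<longleftrightarrow>
    (\<Sum>u\<in>ext_V V. ecc (ext_V V) (ext_E V E) (ext_w w k) u) = enat (2 * k * n + k)"
proof -
  have "V \<noteq> {}" using assms(2,3) by auto
  have "radius V E w \<ge> enat k \<longleftrightarrow> (\<forall>u\<in>V. enat k \<le> ecc V E w u)"
    unfolding radius_def using assms(1) \<open>V \<noteq> {}\<close> by (subst Min_ge_iff) auto
  also have "\<dots> \<longleftrightarrow> (\<forall>u\<in>V. ecc_ext V E w k (Some u) = enat (2 * k))"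
    using ecc_ext_Some_eq_iff[OF assms(1)] by blast
  also have "\<dots> \<longleftrightarrow> (\<Sum>u\<in>V. ecc_ext V E w k (Some u)) = enat (2 * k * n)"
    using sum_enat_eq_card_mult_iff[OF assms(1)] ecc_ext_Some_le[OF assms(1)] assms(2) by simp
  also have "\<dots> \<longleftrightarrow> enat k + (\<Sum>u\<in>V. ecc_ext V E w k (Some u)) = enat (2 * k * n + k)"
    by (cases "\<Sum>u\<in>V. ecc_ext V E w k (Some u)") auto
  also have "\<dots> \<longleftrightarrow> (\<Sum>u\<in>ext_V V. ecc_ext V E w k u) = enat (2 * k * n + k)"
    using assms(1) \<open>V \<noteq> {}\<close> by (simp add: sum_ext_V ecc_ext_None)
  finally show ?thesis .
qed

end
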